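(* For any $n\ge2$ and any tropical curve $\Gamma$, the tropical rational function semifield $\overline{\boldsymbol{T}(X_1,\ldots,X_n)}$ is not isomorphic to $\operatorname{Rat}(\Gamma)$ as a $\boldsymbol{T}$-algebra.
   Context: $\boldsymbol{T}=\mathbb{R}\cup\{-\infty\}$ with $a\oplus b=\max\{a,b\}$, $a\odot b=a+b$. $\overline{\boldsymbol{T}[X_1,\ldots,X_n]}$ is the tropical polynomial semiring modulo identifying polynomials defining the same function $\boldsymbol{T}^n\to\boldsymbol{T}$; it is cancellative and $\overline{\boldsymbol{T}(X_1,\ldots,X_n)}$ is its semifield of fractions. $\boldsymbol{T}$-algebras are semirings with a semiring homomorphism from $\boldsymbol{T}$; an isomorphism is a bijective compatible semiring homomorphism. A tropical curve is the metric space obtained from a finite connected multigraph with edge lengths in $\mathbb{R}_{>0}\cup\{\infty\}$ ($\infty$ only on leaf edges, whose leaf end becomes a point at infinity) by identifying each edge with a closed interval of that length. A rational function on $\Gamma$ is the constant $-\infty$ or a continuous piecewise affine function $\Gamma\to\mathbb{R}\cup\{\pm\infty\}$ with integer slopes and finitely many pieces, taking $\pm\infty$ only at points at infinity. $\operatorname{Rat}(\Gamma)$, with pointwise max and sum, is a $\boldsymbol{T}$-algebra via constants. *)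

theory Defs
  imports "HOL-Library.Extended_Real"
begin

(* Elements of T are the ereals different from \<infinity>;  a \<oplus> b = max a b,  a \<odot> b = a + b. *)

definition talg_iso ::
  "'a set \<Rightarrow> ('a \<Rightarrow> 'a \<Rightarrow> 'a) \<Rightarrow> ('a \<Rightarrow> 'a \<Rightarrow> 'a) \<Rightarrow> (ereal \<Rightarrow> 'a) \<Rightarrow>
   'b set \<Rightarrow> ('b \<Rightarrow> 'b \<Rightarrow> 'b) \<Rightarrow> ('b \<Rightarrow> 'b \<Rightarrow> 'b) \<Rightarrow> (ereal \<Rightarrow> 'b) \<Rightarrow>
   ('a \<Rightarrow> 'b) \<Rightarrow> bool" where
  "talg_iso A addA mulA constA B addB mulB constB \<phi> \<longleftrightarrow>
     bij_betw \<phi> A B \<and>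
     (\<forall>x\<in>A. \<forall>y\<in>A. \<phi> (addA x y) = addB (\<phi> x) (\<phi> y)) \<and>
     (\<forall>x\<in>A. \<forall>y\<in>A. \<phi> (mulA x y) = mulB (\<phi> x) (\<phi> y)) \<and>
     (\<forall>c. c \<noteq> \<infinity> \<longrightarrow> \<phi> (constA c) = constB c)"

definition Tpts :: "nat \<Rightarrow> (nat \<Rightarrow> ereal) set" where
  "Tpts n = {x. (\<forall>i<n. x i \<noteq> \<infinity>) \<and> (\<forall>i. n \<le> i \<longrightarrow> x i = 0)}"

(* monomial c \<odot> X_1^{e_1} ... X_n^{e_n} evaluated at x *)
definition mono_val :: "nat \<Rightarrow> ereal \<times> (nat \<Rightarrow> nat) \<Rightarrow> (nat \<Rightarrow> ereal) \<Rightarrow> ereal" where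
  "mono_val n m x = fst m + (\<Sum>i<n. ereal (real (snd m i)) * x i)"

definition poly_fun :: "nat \<Rightarrow> (ereal \<times> (nat \<Rightarrow> nat)) set \<Rightarrow> (nat \<Rightarrow> ereal) \<Rightarrow> ereal" where
  "poly_fun n M = (\<lambda>x. if x \<in> Tpts n then (SUP m\<in>M. mono_val n m x) else -\<infinity>)"

(* the semiring \<overline>{T[X_1..X_n]}: polynomials identified with the functions they define *)
definition TPoly :: "nat \<Rightarrow> ((nat \<Rightarrow> ereal) \<Rightarrow> ereal) set" where
  "TPoly n = {poly_fun n M | M. finite M \<and> (\<forall>m\<in>M. fst m \<noteq> \<infinity>)}"

definition fplus :: "('x \<Rightarrow> ereal) \<Rightarrow> ('x \<Rightarrow> ereal) \<Rightarrow> 'x \<Rightarrow> ereal" where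
  "fplus f g = (\<lambda>x. max (f x) (g x))"

definition ftimes :: "('x \<Rightarrow> ereal) \<Rightarrow> ('x \<Rightarrow> ereal) \<Rightarrow> 'x \<Rightarrow> ereal" where
  "ftimes f g = (\<lambda>x. f x + g x)"

definition frac_pairs :: "nat \<Rightarrow> (((nat \<Rightarrow> ereal) \<Rightarrow> ereal) \<times> ((nat \<Rightarrow> ereal) \<Rightarrow> ereal)) set" where
  "frac_pairs n = {(f, g). f \<in> TPoly n \<and> g \<in> TPoly n \<and> g \<noteq> (\<lambda>_. -\<infinity>)}"

definition frac_rel :: "nat \<Rightarrow> ((((nat \<Rightarrow> ereal) \<Rightarrow> ereal) \<times> ((nat \<Rightarrow> ereal) \<Rightarrow> ereal)) \<times>
                                (((nat \<Rightarrow> ereal) \<Rightarrow> ereal) \<times> ((nat \<Rightarrow> ereal) \<Rightarrow> ereal))) set" where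
  "frac_rel n = {(p, q). p \<in> frac_pairs n \<and> q \<in> frac_pairs n \<and>
                         ftimes (fst p) (snd q) = ftimes (fst q) (snd p)}"

definition TRat :: "nat \<Rightarrow> (((nat \<Rightarrow> ereal) \<Rightarrow> ereal) \<times> ((nat \<Rightarrow> ereal) \<Rightarrow> ereal)) set set" where
  "TRat n = frac_pairs n // frac_rel n"

definition frac_class where
  "frac_class n p = frac_rel n `` {p}"

definition frac_add where
  "frac_add n X Y = the_elem (\<Union>p\<in>X. \<Union>q\<in>Y.
     {frac_class n (fplus (ftimes (fst p) (snd q)) (ftimes (fst q) (snd p)), ftimes (snd p) (snd q))})"

definition frac_mul where
  "frac_mul n X Y = the_elem (\<Union>p\<in>X. \<Union>q\<in>Y.
     {frac_class n (ftimes (fst p) (fst q), ftimes (snd p) (snd q))})"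

definition frac_const where
  "frac_const n c = frac_class n (poly_fun n {(c, \<lambda>_. 0)}, poly_fun n {(0, \<lambda>_. 0)})"

(* A finite multigraph: vertex set V, edge set E, each edge with endpoints src e, tgt e
   (an orientation chosen only for bookkeeping; loops allowed), lengths in R_{>0} \<union> {\<infinity>}. *)
definition degree :: "'e set \<Rightarrow> ('e \<Rightarrow> 'v) \<Rightarrow> ('e \<Rightarrow> 'v) \<Rightarrow> 'v \<Rightarrow> nat" where
  "degree E src tgt v = card {e\<in>E. src e = v} + card {e\<in>E. tgt e = v}"

definition graph_connected :: "'v set \<Rightarrow> 'e set \<Rightarrow> ('e \<Rightarrow> 'v) \<Rightarrow> ('e \<Rightarrow> 'v) \<Rightarrow> bool" where
  "graph_connected V E src tgt \<longleftrightarrow>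
     (\<forall>u\<in>V. \<forall>w\<in>V. (u, w) \<in> ({(src e, tgt e) | e. e \<in> E} \<union> {(tgt e, src e) | e. e \<in> E})\<^sup>*)"

(* an edge of length \<infinity> is a leaf edge whose leaf end is tgt e (the point at infinity) *)
definition tropical_curve ::
  "'v set \<Rightarrow> 'e set \<Rightarrow> ('e \<Rightarrow> 'v) \<Rightarrow> ('e \<Rightarrow> 'v) \<Rightarrow> ('e \<Rightarrow> ereal) \<Rightarrow> bool" where
  "tropical_curve V E src tgt len \<longleftrightarrow>
     finite V \<and> V \<noteq> {} \<and> finite E \<and>
     (\<forall>e\<in>E. src e \<in> V \<and> tgt e \<in> V \<and> 0 < len e) \<and>
     (\<forall>e\<in>E. len e = \<infinity> \<longrightarrow> degree E src tgt (tgt e) = 1) \<and>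
     graph_connected V E src tgt"

definition inf_pts :: "'e set \<Rightarrow> ('e \<Rightarrow> 'v) \<Rightarrow> ('e \<Rightarrow> ereal) \<Rightarrow> 'v set" where
  "inf_pts E tgt len = {tgt e | e. e \<in> E \<and> len e = \<infinity>}"

(* points of \<Gamma> other than the points at infinity: vertices (not at infinity) and
   interior points (e,t), 0 < t < len e, of edges *)
definition curve_pts ::
  "'v set \<Rightarrow> 'e set \<Rightarrow> ('e \<Rightarrow> 'v) \<Rightarrow> ('e \<Rightarrow> ereal) \<Rightarrow> ('v + 'e \<times> real) set" where
  "curve_pts V E tgt len =
     Inl ` (V - inf_pts E tgt len) \<union> {Inr (e, t) | e t. e \<in> E \<and> 0 < t \<and> ereal t < len e}"

(* restriction of a function on \<Gamma> to edge e, parametrised by arc length t from src e *)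
definition edge_fun ::
  "('e \<Rightarrow> 'v) \<Rightarrow> ('e \<Rightarrow> 'v) \<Rightarrow> ('e \<Rightarrow> ereal) \<Rightarrow> ('v + 'e \<times> real \<Rightarrow> ereal) \<Rightarrow> 'e \<Rightarrow> real \<Rightarrow> ereal" where
  "edge_fun src tgt len F e t =
     (if t = 0 then F (Inl (src e)) else if ereal t = len e then F (Inl (tgt e)) else F (Inr (e, t)))"

definition piecewise_affine_int :: "ereal \<Rightarrow> (real \<Rightarrow> ereal) \<Rightarrow> bool" where
  "piecewise_affine_int L g \<longleftrightarrow>
     (L \<noteq> \<infinity> \<longrightarrow> (\<exists>(k::nat) (a::nat \<Rightarrow> real) (m::nat \<Rightarrow> int) (b::nat \<Rightarrow> real).
        a 0 = 0 \<and> ereal (a k) = L \<and> (\<forall>i<k. a i < a (Suc i)) \<and>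
        (\<forall>i<k. \<forall>t. a i \<le> t \<and> t \<le> a (Suc i) \<longrightarrow> g t = ereal (real_of_int (m i) * t + b i)))) \<and>
     (L = \<infinity> \<longrightarrow> (\<exists>(k::nat) (a::nat \<Rightarrow> real) (m::nat \<Rightarrow> int) (b::nat \<Rightarrow> real).
        a 0 = 0 \<and> (\<forall>i<k. a i < a (Suc i)) \<and>
        (\<forall>i<k. \<forall>t. a i \<le> t \<and> t \<le> a (Suc i) \<longrightarrow> g t = ereal (real_of_int (m i) * t + b i)) \<and>
        (\<forall>t. a k \<le> t \<longrightarrow> g t = ereal (real_of_int (m k) * t + b k))))"

(* Rat(\<Gamma>): a rational function is recorded by its values on the points of \<Gamma> that are not
   at infinity (its values at points at infinity are the limits, hence determined);
   outside \<Gamma> the value is fixed to -\<infinity>. *)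
definition RatG ::
  "'v set \<Rightarrow> 'e set \<Rightarrow> ('e \<Rightarrow> 'v) \<Rightarrow> ('e \<Rightarrow> 'v) \<Rightarrow> ('e \<Rightarrow> ereal) \<Rightarrow> ('v + 'e \<times> real \<Rightarrow> ereal) set" where
  "RatG V E src tgt len =
     {F. (\<forall>p. p \<notin> curve_pts V E tgt len \<longrightarrow> F p = -\<infinity>) \<and>
         ((\<forall>p\<in>curve_pts V E tgt len. F p = -\<infinity>) \<or>
          ((\<forall>p\<in>curve_pts V E tgt len. F p \<noteq> \<infinity> \<and> F p \<noteq> -\<infinity>) \<and>
           (\<forall>e\<in>E. piecewise_affine_int (len e) (edge_fun src tgt len F e))))}"

definition rat_const ::
  "'v set \<Rightarrow> 'e set \<Rightarrow> ('e \<Rightarrow> 'v) \<Rightarrow> ('e \<Rightarrow> ereal) \<Rightarrow> ereal \<Rightarrow> ('v + 'e \<times> real \<Rightarrow> ereal)" where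
  "rat_const V E tgt len c = (\<lambda>p. if p \<in> curve_pts V E tgt len then c else -\<infinity>)"

end

theory Submission
  imports Defs "HOL-Analysis.Extended_Real_Limits"
begin

text \<open>In \<open>T(X\<^sub>1, ..., X\<^sub>n)\<close> with \<open>n \<ge> 2\<close> there are infinitely many
  fractions \<open>F\<^sub>j \<ge> 0\<close> that are unbounded (\<open>F\<^sub>j \<oplus> c \<noteq> c\<close> for every
  constant \<open>c\<close>) and pairwise satisfy \<open>F\<^sub>i \<odot> F\<^sub>j = F\<^sub>i \<oplus> F\<^sub>j\<close>, i.e.
  \<open>min F\<^sub>i F\<^sub>j = 0\<close>: take functions positive exactly on pairwise disjoint open cones.
  In \<open>Rat(\<Gamma>)\<close> an unbounded function must be eventually positive along some leaf edge,
  because a piecewise affine function is bounded on every edge of finite length and on every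
  leaf edge on which it is not eventually positive. By the second relation two of the images
  cannot be eventually positive on the same leaf edge, so an isomorphism would produce
  infinitely many leaf edges.\<close>

interpretation ftimes: abel_semigroup "ftimes :: ('x \<Rightarrow> ereal) \<Rightarrow> _"
  by standard (auto simp: ftimes_def add_ac)

lemma ereal_max_add_distrib_left: "max (a::ereal) b + c = max (a + c) (b + c)"
  by (simp add: max_def add_right_mono antisym)

lemma ftimes_fplus_distrib_left: "ftimes (fplus f g) h = fplus (ftimes f h) (ftimes g h)"
  by (simp add: ftimes_def fplus_def ereal_max_add_distrib_left)

lemma SUP_finite_attained:
  fixes f :: "'a \<Rightarrow> ereal"
  assumes "finite A" "A \<noteq> {}"
  obtains a where "a \<in> A" "(SUP x\<in>A. f x) = f a"
proof -
  have "Max (f ` A) \<in> f ` A" using assms by simp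
  then obtain a where "a \<in> A" "Max (f ` A) = f a" by auto
  then show ?thesis using that assms by (simp add: cSup_eq_Max)
qed

lemma SUP_finite_not_PInf:
  fixes f :: "'a \<Rightarrow> ereal"
  assumes "finite A" "\<And>a. a \<in> A \<Longrightarrow> f a \<noteq> \<infinity>"
  shows "(SUP a\<in>A. f a) \<noteq> \<infinity>"
proof (cases "A = {}")
  case False
  then obtain a where "a \<in> A" "(SUP x\<in>A. f x) = f a" using SUP_finite_attained assms(1) by blast
  with assms(2) show ?thesis by simp
qed (simp add: bot_ereal_def)

lemma SUP_add_SUP_ereal:
  fixes f g :: "'a \<Rightarrow> ereal"
  assumes "finite A" "finite B" "\<And>a. a \<in> A \<Longrightarrow> f a \<noteq> \<infinity>" "\<And>b. b \<in> B \<Longrightarrow> g b \<noteq> \<infinity>"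
  shows "(SUP a\<in>A. f a) + (SUP b\<in>B. g b) = (SUP p\<in>A \<times> B. f (fst p) + g (snd p))"
proof (cases "A = {} \<or> B = {}")
  case True
  then show ?thesis
    using SUP_finite_not_PInf[of A f] SUP_finite_not_PInf[of B g] assms by (auto simp: bot_ereal_def)
next
  case False
  then obtain a b where ab: "a \<in> A" "(SUP a\<in>A. f a) = f a" "b \<in> B" "(SUP b\<in>B. g b) = g b"
    using SUP_finite_attained assms(1,2) by metis
  show ?thesis
  proof (rule antisym)
    show "(SUP a\<in>A. f a) + (SUP b\<in>B. g b) \<le> (SUP p\<in>A \<times> B. f (fst p) + g (snd p))"
      using ab by (intro SUP_upper2[of "(a, b)"]) auto
  qed (intro SUP_least add_mono SUP_upper; auto)
qed

lemma tendsto_sum_ereal_not_PInf: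
  fixes f :: "'i \<Rightarrow> 'a \<Rightarrow> ereal"
  assumes "\<And>i. i \<in> A \<Longrightarrow> (f i \<longlongrightarrow> L i) F" "\<And>i. i \<in> A \<Longrightarrow> L i \<noteq> \<infinity>"
  shows "((\<lambda>t. \<Sum>i\<in>A. f i t) \<longlongrightarrow> (\<Sum>i\<in>A. L i)) F"
  using assms
proof (induction A rule: infinite_finite_induct)
  case (insert x A)
  then have "(\<Sum>i\<in>A. L i) \<noteq> \<infinity>" by (simp add: sum_Pinfty)
  with insert show ?case by (simp add: tendsto_add_ereal_general)
qed simp_all

section \<open>Tropical polynomial functions\<close>

lemma mono_val_not_PInf:
  assumes "x \<in> Tpts n" "fst m \<noteq> \<infinity>"
  shows "mono_val n m x \<noteq> \<infinity>"
proof -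
  have "ereal (real (snd m i)) * x i \<noteq> \<infinity>" if "i < n" for i
    using assms(1) that by (cases "x i") (auto simp: Tpts_def)
  with assms(2) show ?thesis by (simp add: mono_val_def sum_Pinfty)
qed

lemma poly_fun_not_PInf:
  assumes "\<forall>m\<in>M. fst m \<noteq> \<infinity>" "finite M"
  shows "poly_fun n M x \<noteq> \<infinity>"
  using assms mono_val_not_PInf SUP_finite_not_PInf[of M] by (simp add: poly_fun_def)

lemma TPoly_not_PInf: "f \<in> TPoly n \<Longrightarrow> f x \<noteq> \<infinity>"
  unfolding TPoly_def using poly_fun_not_PInf by blast

lemma TPoly_outside_Tpts: "f \<in> TPoly n \<Longrightarrow> x \<notin> Tpts n \<Longrightarrow> f x = -\<infinity>"
  unfolding TPoly_def poly_fun_def by auto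

definition real_pts :: "nat \<Rightarrow> (nat \<Rightarrow> ereal) set" where
  "real_pts n = {x \<in> Tpts n. \<forall>i<n. x i \<noteq> -\<infinity>}"

lemma zero_in_real_pts: "(\<lambda>_. 0) \<in> real_pts n"
  by (simp add: real_pts_def Tpts_def)

lemma mono_val_real_pts:
  assumes "x \<in> real_pts n"
  shows "mono_val n m x = fst m + ereal (\<Sum>i<n. real (snd m i) * real_of_ereal (x i))"
proof -
  have "ereal (real (snd m i)) * x i = ereal (real (snd m i) * real_of_ereal (x i))" if "i < n" for i
    using assms that by (cases "x i") (auto simp: real_pts_def Tpts_def)
  then show ?thesis by (simp add: mono_val_def)
qed

lemma TPoly_real_pts_not_MInf:
  assumes "f \<in> TPoly n" "f \<noteq> (\<lambda>_. -\<infinity>)" "x \<in> real_pts n"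
  shows "f x \<noteq> -\<infinity>"
proof -
  obtain M where M: "f = poly_fun n M" "finite M" "\<forall>m\<in>M. fst m \<noteq> \<infinity>"
    using assms(1) unfolding TPoly_def by blast
  have "x \<in> Tpts n" using assms(3) by (simp add: real_pts_def)
  have "\<exists>m\<in>M. fst m \<noteq> -\<infinity>"
  proof (rule ccontr)
    assume "\<not> ?thesis"
    then have "mono_val n m y = -\<infinity>" if "m \<in> M" "y \<in> Tpts n" for m y
      using that mono_val_not_PInf[OF that(2), of "(0, snd m)"] by (simp add: mono_val_def)
    then have "f y = -\<infinity>" for y
      by (cases "y \<in> Tpts n") (auto simp: M(1) poly_fun_def intro!: antisym SUP_least)
    with assms(2) show False by auto
  qed
  then obtain m where "m \<in> M" "fst m \<noteq> -\<infinity>" by blast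
  then have "mono_val n m x \<noteq> -\<infinity>" "mono_val n m x \<le> f x"
    using M \<open>x \<in> Tpts n\<close> mono_val_real_pts[OF assms(3)] by (auto simp: poly_fun_def intro: SUP_upper)
  then show ?thesis by auto
qed

definition mono_mult :: "ereal \<times> (nat \<Rightarrow> nat) \<Rightarrow> ereal \<times> (nat \<Rightarrow> nat) \<Rightarrow> ereal \<times> (nat \<Rightarrow> nat)" where
  "mono_mult m m' = (fst m + fst m', \<lambda>i. snd m i + snd m' i)"

lemma ereal_of_nat_add_mult:
  assumes "(y::ereal) \<noteq> \<infinity>"
  shows "ereal (real (e + e')) * y = ereal (real e) * y + ereal (real e') * y"
  using assms by (cases y) (auto simp: distrib_right zero_ereal_def[symmetric])

lemma mono_val_mono_mult:
  assumes "x \<in> Tpts n"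
  shows "mono_val n (mono_mult m m') x = mono_val n m x + mono_val n m' x"
proof -
  have "(\<Sum>i<n. ereal (real (snd m i + snd m' i)) * x i)
      = (\<Sum>i<n. ereal (real (snd m i)) * x i) + (\<Sum>i<n. ereal (real (snd m' i)) * x i)"
    unfolding sum.distrib[symmetric]
    using assms by (intro sum.cong refl ereal_of_nat_add_mult) (auto simp: Tpts_def)
  then show ?thesis unfolding mono_val_def mono_mult_def by (simp add: ac_simps)
qed

lemma TPoly_fplus:
  assumes "f \<in> TPoly n" "g \<in> TPoly n"
  shows "fplus f g \<in> TPoly n"
proof -
  obtain M M' where "f = poly_fun n M" "g = poly_fun n M'" "finite M" "finite M'"
    "\<forall>m\<in>M \<union> M'. fst m \<noteq> \<infinity>"
    using assms unfolding TPoly_def by blast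
  moreover from this have "fplus f g = poly_fun n (M \<union> M')"
    by (auto simp: fplus_def poly_fun_def SUP_union sup_max)
  ultimately show ?thesis unfolding TPoly_def by blast
qed

lemma TPoly_ftimes:
  assumes "f \<in> TPoly n" "g \<in> TPoly n"
  shows "ftimes f g \<in> TPoly n"
proof -
  obtain M M' where M: "f = poly_fun n M" "g = poly_fun n M'" "finite M" "finite M'"
    "\<forall>m\<in>M. fst m \<noteq> \<infinity>" "\<forall>m\<in>M'. fst m \<noteq> \<infinity>"
    using assms unfolding TPoly_def by blast
  define MM where "MM = (\<lambda>p. mono_mult (fst p) (snd p)) ` (M \<times> M')"
  have "ftimes f g x = poly_fun n MM x" for x
  proof (cases "x \<in> Tpts n")
    case True
    have "(SUP m\<in>M. mono_val n m x) + (SUP m\<in>M'. mono_val n m x)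
        = (SUP p\<in>M \<times> M'. mono_val n (fst p) x + mono_val n (snd p) x)"
      using M mono_val_not_PInf[OF True] by (intro SUP_add_SUP_ereal) auto
    also have "\<dots> = (SUP m\<in>MM. mono_val n m x)"
      unfolding MM_def image_image using mono_val_mono_mult[OF True] by simp
    finally show ?thesis using True by (simp add: M ftimes_def poly_fun_def)
  qed (simp add: M ftimes_def poly_fun_def)
  moreover have "finite MM" "\<forall>m\<in>MM. fst m \<noteq> \<infinity>"
    using M by (auto simp: MM_def mono_mult_def)
  ultimately show ?thesis unfolding TPoly_def by blast
qed

text \<open>Every point of \<open>T\<^sup>n\<close> is the limit of real points along \<open>real_approx x\<close>, and
  polynomial functions are continuous along these curves; so identities between them, in
  particular cancellation, need only be checked at real points.\<close>

definition real_approx :: "(nat \<Rightarrow> ereal) \<Rightarrow> real \<Rightarrow> nat \<Rightarrow> ereal" where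
  "real_approx x t = (\<lambda>i. if x i = -\<infinity> then ereal (-t) else x i)"

lemma real_approx_in_real_pts: "x \<in> Tpts n \<Longrightarrow> real_approx x t \<in> real_pts n"
  by (auto simp: real_approx_def real_pts_def Tpts_def)

lemma mono_val_real_approx_tendsto:
  assumes "x \<in> Tpts n" "fst m \<noteq> \<infinity>"
  shows "((\<lambda>t. mono_val n m (real_approx x t)) \<longlongrightarrow> mono_val n m x) at_top"
proof -
  have to_MInf: "((\<lambda>t::real. ereal (-t)) \<longlongrightarrow> -\<infinity>) at_top"
    using filterlim_ident tendsto_PInfty_eq_at_top tendsto_uminus_ereal by fastforce
  have "((\<lambda>t. ereal (real (snd m i)) * real_approx x t i) \<longlongrightarrow> ereal (real (snd m i)) * x i) at_top"
    if "i < n" for i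
  proof (cases "x i = -\<infinity>")
    case True
    have "((\<lambda>t. ereal (real (snd m i)) * ereal (-t)) \<longlongrightarrow> ereal (real (snd m i)) * -\<infinity>) at_top"
      using to_MInf by (rule tendsto_cmult_ereal_general) simp
    with True show ?thesis by (simp add: real_approx_def)
  qed (simp add: real_approx_def)
  moreover have "ereal (real (snd m i)) * x i \<noteq> \<infinity>" if "i < n" for i
    using assms(1) that by (cases "x i") (auto simp: Tpts_def)
  ultimately have "((\<lambda>t. \<Sum>i<n. ereal (real (snd m i)) * real_approx x t i)
      \<longlongrightarrow> (\<Sum>i<n. ereal (real (snd m i)) * x i)) at_top"
    by (intro tendsto_sum_ereal_not_PInf) auto
  moreover have "(\<Sum>i<n. ereal (real (snd m i)) * x i) \<noteq> \<infinity>"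
    using mono_val_not_PInf[OF assms(1), of "(0, snd m)"] by (simp add: mono_val_def)
  ultimately show ?thesis
    using assms(2) unfolding mono_val_def by (intro tendsto_add_ereal_general) auto
qed

lemma TPoly_real_approx_tendsto:
  assumes "f \<in> TPoly n" "x \<in> Tpts n"
  shows "((\<lambda>t. f (real_approx x t)) \<longlongrightarrow> f x) at_top"
proof -
  obtain M where M: "f = poly_fun n M" "finite M" "\<forall>m\<in>M. fst m \<noteq> \<infinity>"
    using assms(1) unfolding TPoly_def by blast
  have "((\<lambda>t. SUP m\<in>M. mono_val n m (real_approx x t)) \<longlongrightarrow> (SUP m\<in>M. mono_val n m x)) at_top"
    using M(2,3)
    by (induction M rule: finite_induct)
      (simp_all add: sup_max tendsto_max mono_val_real_approx_tendsto[OF assms(2)])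
  moreover have "real_approx x t \<in> Tpts n" for t
    using real_approx_in_real_pts[OF assms(2)] by (simp add: real_pts_def)
  ultimately show ?thesis using assms(2) by (simp add: M(1) poly_fun_def)
qed

lemma TPoly_eqI_real_pts:
  assumes "f \<in> TPoly n" "g \<in> TPoly n" "\<And>x. x \<in> real_pts n \<Longrightarrow> f x = g x"
  shows "f = g"
proof
  fix x show "f x = g x"
  proof (cases "x \<in> Tpts n")
    case True
    have "((\<lambda>t. f (real_approx x t)) \<longlongrightarrow> g x) at_top"
      using TPoly_real_approx_tendsto[OF assms(2) True] assms(3)[OF real_approx_in_real_pts[OF True]]
      by simp
    with TPoly_real_approx_tendsto[OF assms(1) True] show ?thesis
      by (rule tendsto_unique[rotated]) simp
  qed (simp add: TPoly_outside_Tpts[OF assms(1)] TPoly_outside_Tpts[OF assms(2)])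
qed

lemma TPoly_ftimes_cancel_right:
  assumes "f \<in> TPoly n" "g \<in> TPoly n" "h \<in> TPoly n" "h \<noteq> (\<lambda>_. -\<infinity>)"
    and "ftimes f h = ftimes g h"
  shows "f = g"
proof (rule TPoly_eqI_real_pts[OF assms(1,2)])
  fix x assume "x \<in> real_pts n"
  then have "h x \<noteq> -\<infinity>" "h x \<noteq> \<infinity>"
    using assms(3,4) TPoly_real_pts_not_MInf TPoly_not_PInf by blast+
  moreover have "f x + h x = g x + h x"
    using fun_cong[OF assms(5), of x] by (simp add: ftimes_def)
  ultimately show "f x = g x" by (simp add: ereal_add_cancel_right)
qed

lemma TPoly_ftimes_nonzero:
  assumes "f \<in> TPoly n" "g \<in> TPoly n" "f \<noteq> (\<lambda>_. -\<infinity>)" "g \<noteq> (\<lambda>_. -\<infinity>)"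
  shows "ftimes f g \<noteq> (\<lambda>_. -\<infinity>)"
proof -
  have "f (\<lambda>_. 0) \<noteq> -\<infinity>" "g (\<lambda>_. 0) \<noteq> -\<infinity>"
    using assms TPoly_real_pts_not_MInf zero_in_real_pts by blast+
  then show ?thesis by (auto simp: ftimes_def dest: fun_cong[of _ _ "\<lambda>_. 0"])
qed

section \<open>The semifield of fractions\<close>

lemma mem_frac_pairs_iff:
  "p \<in> frac_pairs n \<longleftrightarrow> fst p \<in> TPoly n \<and> snd p \<in> TPoly n \<and> snd p \<noteq> (\<lambda>_. -\<infinity>)"
  by (cases p) (auto simp: frac_pairs_def)

lemma frac_rel_trans:
  assumes "(p, q) \<in> frac_rel n" "(q, r) \<in> frac_rel n"
  shows "(p, r) \<in> frac_rel n"
proof -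
  have pqr: "p \<in> frac_pairs n" "q \<in> frac_pairs n" "r \<in> frac_pairs n"
    and pq: "ftimes (fst p) (snd q) = ftimes (fst q) (snd p)"
    and qr: "ftimes (fst q) (snd r) = ftimes (fst r) (snd q)"
    using assms by (auto simp: frac_rel_def)
  have "ftimes (ftimes (fst p) (snd r)) (snd q) = ftimes (ftimes (fst p) (snd q)) (snd r)"
    by (simp add: ftimes.assoc ftimes.commute ftimes.left_commute)
  also have "\<dots> = ftimes (ftimes (fst q) (snd r)) (snd p)"
    by (simp only: pq) (simp add: ftimes.assoc ftimes.commute ftimes.left_commute)
  also have "\<dots> = ftimes (ftimes (fst r) (snd p)) (snd q)"
    by (simp only: qr) (simp add: ftimes.assoc ftimes.commute ftimes.left_commute)
  finally have "ftimes (fst p) (snd r) = ftimes (fst r) (snd p)"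
    by (rule TPoly_ftimes_cancel_right[rotated 4])
      (use pqr in \<open>auto simp: mem_frac_pairs_iff TPoly_ftimes\<close>)
  with pqr show ?thesis by (simp add: frac_rel_def)
qed

lemma equiv_frac_rel: "equiv (frac_pairs n) (frac_rel n)"
proof (rule equivI)
  show "refl_on (frac_pairs n) (frac_rel n)" "sym (frac_rel n)"
    by (auto simp: refl_on_def frac_rel_def intro!: symI)
  show "frac_rel n \<subseteq> frac_pairs n \<times> frac_pairs n" by (auto simp: frac_rel_def)
  show "trans (frac_rel n)" by (rule transI) (rule frac_rel_trans)
qed

lemma frac_class_eq_iff:
  assumes "p \<in> frac_pairs n" "q \<in> frac_pairs n"
  shows "frac_class n p = frac_class n q \<longleftrightarrow> ftimes (fst p) (snd q) = ftimes (fst q) (snd p)"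
proof -
  have "frac_class n p = frac_class n q \<longleftrightarrow> (p, q) \<in> frac_rel n"
    using equiv_class_eq_iff[OF equiv_frac_rel, of p q n] assms by (auto simp: frac_class_def)
  with assms show ?thesis by (simp add: frac_rel_def)
qed

lemma frac_class_in_TRat: "p \<in> frac_pairs n \<Longrightarrow> frac_class n p \<in> TRat n"
  unfolding TRat_def frac_class_def by (rule quotientI)

definition frac_pair_add where
  "frac_pair_add p q = (fplus (ftimes (fst p) (snd q)) (ftimes (fst q) (snd p)), ftimes (snd p) (snd q))"

definition frac_pair_mul where
  "frac_pair_mul p q = (ftimes (fst p) (fst q), ftimes (snd p) (snd q))"

lemma frac_pair_add_in_frac_pairs:
  "p \<in> frac_pairs n \<Longrightarrow> q \<in> frac_pairs n \<Longrightarrow> frac_pair_add p q \<in> frac_pairs n"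
  using TPoly_ftimes_nonzero[of "snd p" n "snd q"]
  by (simp add: mem_frac_pairs_iff frac_pair_add_def TPoly_fplus TPoly_ftimes)

lemma frac_pair_mul_in_frac_pairs:
  "p \<in> frac_pairs n \<Longrightarrow> q \<in> frac_pairs n \<Longrightarrow> frac_pair_mul p q \<in> frac_pairs n"
  using TPoly_ftimes_nonzero[of "snd p" n "snd q"]
  by (simp add: mem_frac_pairs_iff frac_pair_mul_def TPoly_ftimes)

lemma frac_pair_add_respects: "(\<lambda>p q. {frac_class n (frac_pair_add p q)}) respects2 frac_rel n"
proof (rule congruent2I')
  fix p p' q q' assume "(p, p') \<in> frac_rel n" "(q, q') \<in> frac_rel n"
  then have in_pairs: "p \<in> frac_pairs n" "p' \<in> frac_pairs n" "q \<in> frac_pairs n" "q' \<in> frac_pairs n"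
    and pp': "ftimes (fst p) (snd p') = ftimes (fst p') (snd p)"
    and qq': "ftimes (fst q) (snd q') = ftimes (fst q') (snd q)"
    by (auto simp: frac_rel_def)
  have "ftimes (fst (frac_pair_add p q)) (snd (frac_pair_add p' q'))
      = fplus (ftimes (ftimes (fst p) (snd p')) (ftimes (snd q) (snd q')))
              (ftimes (ftimes (fst q) (snd q')) (ftimes (snd p) (snd p')))"
    by (simp only: frac_pair_add_def fst_conv snd_conv ftimes_fplus_distrib_left)
      (simp add: ftimes.assoc ftimes.commute ftimes.left_commute)
  also have "\<dots> = ftimes (fst (frac_pair_add p' q')) (snd (frac_pair_add p q))"
    by (simp only: pp' qq' frac_pair_add_def fst_conv snd_conv ftimes_fplus_distrib_left)
      (simp add: ftimes.assoc ftimes.commute ftimes.left_commute)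
  finally show "{frac_class n (frac_pair_add p q)} = {frac_class n (frac_pair_add p' q')}"
    using in_pairs by (simp add: frac_class_eq_iff frac_pair_add_in_frac_pairs)
qed

lemma frac_pair_mul_respects: "(\<lambda>p q. {frac_class n (frac_pair_mul p q)}) respects2 frac_rel n"
proof (rule congruent2I')
  fix p p' q q' assume "(p, p') \<in> frac_rel n" "(q, q') \<in> frac_rel n"
  then have in_pairs: "p \<in> frac_pairs n" "p' \<in> frac_pairs n" "q \<in> frac_pairs n" "q' \<in> frac_pairs n"
    and pp': "ftimes (fst p) (snd p') = ftimes (fst p') (snd p)"
    and qq': "ftimes (fst q) (snd q') = ftimes (fst q') (snd q)"
    by (auto simp: frac_rel_def)
  have "ftimes (fst (frac_pair_mul p q)) (snd (frac_pair_mul p' q'))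
      = ftimes (ftimes (fst p) (snd p')) (ftimes (fst q) (snd q'))"
    by (simp add: frac_pair_mul_def ftimes.assoc ftimes.left_commute)
  also have "\<dots> = ftimes (fst (frac_pair_mul p' q')) (snd (frac_pair_mul p q))"
    by (simp only: pp' qq') (simp add: frac_pair_mul_def ftimes.assoc ftimes.left_commute)
  finally show "{frac_class n (frac_pair_mul p q)} = {frac_class n (frac_pair_mul p' q')}"
    using in_pairs by (simp add: frac_class_eq_iff frac_pair_mul_in_frac_pairs)
qed

lemma frac_add_frac_class:
  assumes "p \<in> frac_pairs n" "q \<in> frac_pairs n"
  shows "frac_add n (frac_class n p) (frac_class n q) = frac_class n (frac_pair_add p q)"
  using UN_equiv_class2[OF equiv_frac_rel equiv_frac_rel frac_pair_add_respects assms]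
  by (simp add: frac_add_def frac_class_def frac_pair_add_def)

lemma frac_mul_frac_class:
  assumes "p \<in> frac_pairs n" "q \<in> frac_pairs n"
  shows "frac_mul n (frac_class n p) (frac_class n q) = frac_class n (frac_pair_mul p q)"
  using UN_equiv_class2[OF equiv_frac_rel equiv_frac_rel frac_pair_mul_respects assms]
  by (simp add: frac_mul_def frac_class_def frac_pair_mul_def)

lemma frac_add_in_TRat:
  assumes "X \<in> TRat n" "Y \<in> TRat n"
  shows "frac_add n X Y \<in> TRat n"
proof -
  obtain p q where "p \<in> frac_pairs n" "q \<in> frac_pairs n" "X = frac_class n p" "Y = frac_class n q"
    using assms unfolding TRat_def frac_class_def by (auto elim!: quotientE)
  then show ?thesis by (simp add: frac_add_frac_class frac_pair_add_in_frac_pairs frac_class_in_TRat)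
qed

section \<open>A sequence of pairwise disjoint unbounded fractions\<close>

definition exps2 :: "nat \<Rightarrow> nat \<Rightarrow> nat \<Rightarrow> nat" where
  "exps2 a b = (\<lambda>i. if i = 0 then a else if i = 1 then b else 0)"

definition const_poly :: "nat \<Rightarrow> ereal \<Rightarrow> (nat \<Rightarrow> ereal) \<Rightarrow> ereal" where
  "const_poly n c = poly_fun n {(c, \<lambda>_. 0)}"

definition cone_den :: "nat \<Rightarrow> nat \<Rightarrow> (nat \<Rightarrow> ereal) \<Rightarrow> ereal" where
  "cone_den n j = poly_fun n {(0, exps2 0 2), (0, exps2 (2*j+1) 0)}"

definition cone_num :: "nat \<Rightarrow> nat \<Rightarrow> (nat \<Rightarrow> ereal) \<Rightarrow> ereal" where
  "cone_num n j = poly_fun n {(0, exps2 0 2), (0, exps2 (2*j+1) 0), (0, exps2 (j+1) 1)}"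

text \<open>As a function of \<open>(X\<^sub>1, X\<^sub>2) = (a, b) \<in> \<real>\<^sup>2\<close>, \<open>cone_frac n j\<close> is
  \<open>max 0 ((j+1) a + b - max (2 b) ((2j+1) a))\<close>, which is positive exactly on the open cone
  \<open>j a < b < (j+1) a\<close>; these cones are pairwise disjoint.\<close>

definition cone_frac :: "nat \<Rightarrow> nat \<Rightarrow> (((nat \<Rightarrow> ereal) \<Rightarrow> ereal) \<times> ((nat \<Rightarrow> ereal) \<Rightarrow> ereal)) set" where
  "cone_frac n j = frac_class n (cone_num n j, cone_den n j)"

lemma mono_val_exps2:
  assumes "2 \<le> n"
  shows "mono_val n (c, exps2 a b) x = c + (ereal (real a) * x 0 + ereal (real b) * x 1)"
proof -
  have "(\<Sum>i<n. ereal (real (exps2 a b i)) * x i) = (\<Sum>i\<in>{0,1}. ereal (real (exps2 a b i)) * x i)"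
    using assms by (intro sum.mono_neutral_right) (auto simp: exps2_def zero_ereal_def[symmetric])
  then show ?thesis unfolding mono_val_def by (simp add: exps2_def)
qed

lemma const_poly_eq: "x \<in> Tpts n \<Longrightarrow> const_poly n c x = c"
  by (simp add: const_poly_def poly_fun_def mono_val_def zero_ereal_def[symmetric])

lemma cone_den_eq:
  "2 \<le> n \<Longrightarrow> x \<in> Tpts n \<Longrightarrow> cone_den n j x = max (ereal 2 * x 1) (ereal (real (2*j+1)) * x 0)"
  by (simp add: cone_den_def poly_fun_def mono_val_exps2 sup_max zero_ereal_def[symmetric])

lemma cone_num_eq:
  "2 \<le> n \<Longrightarrow> x \<in> Tpts n \<Longrightarrow> cone_num n j x = max (cone_den n j x) (ereal (real (j+1)) * x 0 + x 1)"
  by (simp add: cone_num_def cone_den_def poly_fun_def mono_val_exps2 sup_max max.assoc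
      zero_ereal_def[symmetric])

lemma cone_num_in_TPoly: "cone_num n j \<in> TPoly n"
  unfolding cone_num_def TPoly_def by force

lemma cone_den_in_TPoly: "cone_den n j \<in> TPoly n"
  unfolding cone_den_def TPoly_def by force

lemma const_poly_in_TPoly: "c \<noteq> \<infinity> \<Longrightarrow> const_poly n c \<in> TPoly n"
  unfolding const_poly_def TPoly_def by force

lemma const_frac_pair:
  assumes "c \<noteq> \<infinity>"
  shows "(const_poly n c, const_poly n 0) \<in> frac_pairs n"
proof -
  have "const_poly n 0 (\<lambda>_. 0) = 0"
    using const_poly_eq zero_in_real_pts by (simp add: real_pts_def)
  then have "const_poly n 0 \<noteq> (\<lambda>_. -\<infinity>)" by auto
  with assms show ?thesis by (simp add: frac_pairs_def const_poly_in_TPoly)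
qed

lemma frac_const_eq_frac_class: "frac_const n c = frac_class n (const_poly n c, const_poly n 0)"
  by (simp add: frac_const_def const_poly_def)

lemma frac_const_in_TRat: "c \<noteq> \<infinity> \<Longrightarrow> frac_const n c \<in> TRat n"
  by (simp add: frac_const_eq_frac_class const_frac_pair frac_class_in_TRat)

lemma cone_frac_pair: "2 \<le> n \<Longrightarrow> (cone_num n j, cone_den n j) \<in> frac_pairs n"
proof -
  assume n: "2 \<le> n"
  have "cone_den n j (\<lambda>_. 0) = 0"
    using cone_den_eq[OF n, of "\<lambda>_. 0"] zero_in_real_pts by (simp add: real_pts_def)
  then have "cone_den n j \<noteq> (\<lambda>_. -\<infinity>)" by auto
  then show ?thesis by (simp add: frac_pairs_def cone_num_in_TPoly cone_den_in_TPoly)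
qed

lemma cone_frac_in_TRat: "2 \<le> n \<Longrightarrow> cone_frac n j \<in> TRat n"
  by (simp add: cone_frac_def cone_frac_pair frac_class_in_TRat)

lemma cones_disjoint_real:
  fixes a b :: real
  assumes "i < j"
  shows "(real i + 1) * a + b \<le> max (2 * b) ((2 * real i + 1) * a)
       \<or> (real j + 1) * a + b \<le> max (2 * b) ((2 * real j + 1) * a)"
proof (rule ccontr)
  assume "\<not> ?thesis"
  then have "real i * a < b" "b < (real i + 1) * a" "real j * a < b" by (auto simp: algebra_simps)
  then have "0 < a" by (simp add: algebra_simps)
  then have "(real i + 1) * a \<le> real j * a" using assms by (intro mult_right_mono) auto
  with \<open>b < (real i + 1) * a\<close> \<open>real j * a < b\<close> show False by simp
qed

lemma cones_disjoint:
  assumes "2 \<le> n" "x \<in> Tpts n" "i \<noteq> j"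
  shows "ereal (real (i+1)) * x 0 + x 1 \<le> cone_den n i x \<or> ereal (real (j+1)) * x 0 + x 1 \<le> cone_den n j x"
proof (cases "x 0 = -\<infinity> \<or> x 1 = -\<infinity>")
  case True
  moreover have "x 0 \<noteq> \<infinity>" "x 1 \<noteq> \<infinity>" using assms(1,2) by (auto simp: Tpts_def)
  ultimately have "ereal (real (i+1)) * x 0 + x 1 = -\<infinity>" by (cases "x 0"; cases "x 1") auto
  moreover have "-\<infinity> \<le> cone_den n i x" by simp
  ultimately show ?thesis by (intro disjI1) (simp only:)
next
  case False
  moreover have "x 0 \<noteq> \<infinity>" "x 1 \<noteq> \<infinity>" using assms(1,2) by (auto simp: Tpts_def)
  ultimately obtain a b where "x 0 = ereal a" "x 1 = ereal b" by (cases "x 0"; cases "x 1") auto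
  then show ?thesis
    using assms cones_disjoint_real[of i j a b] cones_disjoint_real[of j i a b]
    by (cases "i < j") (auto simp: cone_den_eq algebra_simps simp flip: ereal_max)
qed

lemma ereal_max_add_max_eq:
  fixes a b c d :: ereal
  assumes "b \<le> a \<or> d \<le> c"
  shows "max a b + max c d = max (max a b + c) (max c d + a)"
proof (cases "b \<le> a")
  case True
  have "a + c \<le> a + max c d" by (simp add: add_left_mono)
  with True show ?thesis by (simp add: max_absorb1 max_absorb2 add.commute)
next
  case False
  with assms have "d \<le> c" by simp
  have "c + a \<le> c + max a b" by (simp add: add_left_mono)
  with \<open>d \<le> c\<close> show ?thesis by (simp add: max_absorb1 max_absorb2 add.commute)
qed

lemma cone_frac_mul_eq_add:
  assumes "2 \<le> n" "i \<noteq> j"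
  shows "frac_mul n (cone_frac n i) (cone_frac n j) = frac_add n (cone_frac n i) (cone_frac n j)"
proof -
  let ?P = "\<lambda>k. (cone_num n k, cone_den n k)"
  have num_eq: "cone_num n i x + cone_num n j x
      = max (cone_num n i x + cone_den n j x) (cone_num n j x + cone_den n i x)" if "x \<in> Tpts n" for x
    using ereal_max_add_max_eq cones_disjoint[OF assms(1) that assms(2)]
    by (simp add: cone_num_eq[OF assms(1) that])
  have "ftimes (fst (frac_pair_mul (?P i) (?P j))) (snd (frac_pair_add (?P i) (?P j)))
      = ftimes (fst (frac_pair_add (?P i) (?P j))) (snd (frac_pair_mul (?P i) (?P j)))"
  proof
    fix x show "ftimes (fst (frac_pair_mul (?P i) (?P j))) (snd (frac_pair_add (?P i) (?P j))) x
      = ftimes (fst (frac_pair_add (?P i) (?P j))) (snd (frac_pair_mul (?P i) (?P j))) x"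
    proof (cases "x \<in> Tpts n")
      case True
      then show ?thesis using num_eq by (simp add: frac_pair_add_def frac_pair_mul_def ftimes_def fplus_def)
    next
      case False
      then have "cone_num n k x = -\<infinity>" "cone_den n k x = -\<infinity>" for k
        using TPoly_outside_Tpts cone_num_in_TPoly cone_den_in_TPoly by blast+
      then show ?thesis by (simp add: frac_pair_add_def frac_pair_mul_def ftimes_def fplus_def)
    qed
  qed
  then show ?thesis
    using cone_frac_pair[OF assms(1)]
    by (simp add: cone_frac_def frac_mul_frac_class frac_add_frac_class frac_class_eq_iff
        frac_pair_add_in_frac_pairs frac_pair_mul_in_frac_pairs)
qed

lemma cone_frac_add_const_neq:
  assumes n: "2 \<le> n" and c: "c \<noteq> \<infinity>"
  shows "frac_add n (cone_frac n j) (frac_const n c) \<noteq> frac_const n c"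
proof
  let ?P = "(cone_num n j, cone_den n j)" and ?C = "(const_poly n c, const_poly n 0)"
  assume "frac_add n (cone_frac n j) (frac_const n c) = frac_const n c"
  then have "frac_class n (frac_pair_add ?P ?C) = frac_class n ?C"
    using frac_add_frac_class[OF cone_frac_pair[OF n] const_frac_pair[OF c]]
    by (simp add: cone_frac_def frac_const_eq_frac_class)
  then have eq: "ftimes (fst (frac_pair_add ?P ?C)) (const_poly n 0) = ftimes (const_poly n c) (snd (frac_pair_add ?P ?C))"
    using frac_class_eq_iff frac_pair_add_in_frac_pairs cone_frac_pair[OF n] const_frac_pair[OF c]
    by simp
  define s where "s = \<bar>real_of_ereal c\<bar> + 1"
  have "0 < s" using abs_ge_zero[of "real_of_ereal c"] unfolding s_def by linarith
  have "c < ereal s" using c by (cases c) (simp_all add: s_def)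
  define z :: "nat \<Rightarrow> ereal" where
    "z = (\<lambda>i. if i = 0 then ereal (2 * s) else if i = 1 then ereal ((2 * real j + 1) * s) else 0)"
  have z: "z \<in> Tpts n" using n by (auto simp: z_def Tpts_def)
  have den: "cone_den n j z = ereal ((4 * real j + 2) * s)"
    using cone_den_eq[OF n z] by (simp add: z_def algebra_simps)
  have "cone_num n j z = max (cone_den n j z) (ereal (real (j+1)) * z 0 + z 1)"
    by (rule cone_num_eq[OF n z])
  also have "\<dots> = ereal ((4 * real j + 3) * s)"
    using den \<open>0 < s\<close> by (simp add: z_def algebra_simps)
  finally have num: "cone_num n j z = ereal ((4 * real j + 3) * s)" .
  have "max (cone_num n j z) (c + cone_den n j z) = c + cone_den n j z"
    using fun_cong[OF eq, of z] const_poly_eq[OF z]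
    by (simp add: frac_pair_add_def ftimes_def fplus_def ac_simps)
  then show False
    using \<open>c < ereal s\<close> den num by (cases c) (auto simp: max_def algebra_simps split: if_splits)
qed

section \<open>Rational functions on a tropical curve\<close>

lemma breakpoint_interval_exists:
  fixes a :: "nat \<Rightarrow> real"
  assumes "\<forall>i<k. a i < a (Suc i)" "a 0 \<le> t" "t \<le> a k" "0 < k"
  shows "\<exists>i<k. a i \<le> t \<and> t \<le> a (Suc i)"
  using assms
proof (induction k)
  case (Suc k)
  show ?case
  proof (cases "0 < k \<and> t \<le> a k")
    case True
    with Suc obtain i where "i < k" "a i \<le> t \<and> t \<le> a (Suc i)" by auto
    then show ?thesis using less_SucI by blast
  next
    case False
    with Suc.prems have "a k \<le> t" by auto
    with Suc.prems show ?thesis by auto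
  qed
qed simp

lemma affine_pieces_bounded_above:
  fixes m :: "nat \<Rightarrow> int"
  assumes pieces: "\<forall>i<k. \<forall>t. a i \<le> t \<and> t \<le> a (Suc i) \<longrightarrow> g t = ereal (real_of_int (m i) * t + b i)"
    and "\<forall>i<k. a i < a (Suc i)" "a 0 = 0" "0 \<le> t" "t \<le> a k" "0 < k"
  shows "g t \<le> ereal (\<Sum>i<k. \<bar>real_of_int (m i)\<bar> * \<bar>a k\<bar> + \<bar>b i\<bar>)"
proof -
  obtain i where i: "i < k" "a i \<le> t" "t \<le> a (Suc i)"
    using breakpoint_interval_exists[of k a t] assms(2-6) by auto
  have "real_of_int (m i) * t \<le> \<bar>real_of_int (m i)\<bar> * \<bar>t\<bar>"
    by (metis abs_ge_self abs_mult)
  also have "\<dots> \<le> \<bar>real_of_int (m i)\<bar> * \<bar>a k\<bar>"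
    using assms(4,5) by (intro mult_left_mono) auto
  finally have "real_of_int (m i) * t + b i \<le> \<bar>real_of_int (m i)\<bar> * \<bar>a k\<bar> + \<bar>b i\<bar>" by linarith
  also have "\<dots> \<le> (\<Sum>i<k. \<bar>real_of_int (m i)\<bar> * \<bar>a k\<bar> + \<bar>b i\<bar>)"
    using i(1) by (intro member_le_sum) auto
  finally show ?thesis using pieces i by simp
qed

lemma piecewise_affine_int_bounded_above_finite:
  assumes "piecewise_affine_int L g" "L \<noteq> \<infinity>"
  shows "\<exists>B. \<forall>t. 0 < t \<and> ereal t < L \<longrightarrow> g t \<le> ereal B"
proof -
  obtain k a m b where "a 0 = 0" "ereal (a k) = L" "\<forall>i<k. a i < a (Suc i)"
    "\<forall>i<k. \<forall>t. a i \<le> t \<and> t \<le> a (Suc i) \<longrightarrow> g t = ereal (real_of_int (m i) * t + b i)"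
    using assms unfolding piecewise_affine_int_def by blast
  moreover have "0 < k" if "0 < t" "ereal t < L" for t
    using that \<open>a 0 = 0\<close> \<open>ereal (a k) = L\<close> by (cases k) auto
  ultimately show ?thesis
    by (intro exI[of _ "\<Sum>i<k. \<bar>real_of_int (m i)\<bar> * \<bar>a k\<bar> + \<bar>b i\<bar>"] allI impI
        affine_pieces_bounded_above) auto
qed

lemma piecewise_affine_int_bounded_above_infinite:
  assumes "piecewise_affine_int \<infinity> g" "\<exists>\<^sub>F t in at_top. g t \<le> 0"
  shows "\<exists>B. \<forall>t. 0 < t \<longrightarrow> g t \<le> ereal B"
proof -
  obtain k a m b where ab: "a 0 = 0" "\<forall>i<k. a i < a (Suc i)"
    and pieces: "\<forall>i<k. \<forall>t. a i \<le> t \<and> t \<le> a (Suc i) \<longrightarrow> g t = ereal (real_of_int (m i) * t + b i)"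
    and tail: "\<forall>t. a k \<le> t \<longrightarrow> g t = ereal (real_of_int (m k) * t + b k)"
    using assms(1) unfolding piecewise_affine_int_def by auto
  have "m k \<le> 0"
  proof (rule ccontr)
    assume "\<not> m k \<le> 0"
    then have "t \<le> real_of_int (m k) * t" if "0 \<le> t" for t
      using that mult_right_mono[of 1 "real_of_int (m k)" t] by simp
    then have "\<forall>t\<ge>max (a k) (\<bar>b k\<bar> + 1). g t > 0"
      using tail by (smt (verit) ereal_less(2) max.boundedE abs_ge_self)
    then have "\<forall>\<^sub>F t in at_top. \<not> g t \<le> 0"
      unfolding eventually_at_top_linorder not_le by blast
    with assms(2) show False by (simp add: frequently_def)
  qed
  define B where "B = (\<Sum>i<k. \<bar>real_of_int (m i)\<bar> * \<bar>a k\<bar> + \<bar>b i\<bar>) + \<bar>b k\<bar>"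
  have "g t \<le> ereal B" if "0 < t" for t
  proof (cases "t \<le> a k")
    case True
    with that ab have "0 < k" by (cases k) auto
    with True that ab pieces
    have "g t \<le> ereal (\<Sum>i<k. \<bar>real_of_int (m i)\<bar> * \<bar>a k\<bar> + \<bar>b i\<bar>)"
      by (intro affine_pieces_bounded_above) auto
    also have "\<dots> \<le> ereal B" by (simp add: B_def)
    finally show ?thesis .
  next
    case False
    have "0 \<le> (\<Sum>i<k. \<bar>real_of_int (m i)\<bar> * \<bar>a k\<bar> + \<bar>b i\<bar>)" by (intro sum_nonneg) simp
    moreover have "real_of_int (m k) * t \<le> 0"
      using \<open>m k \<le> 0\<close> that by (simp add: mult_nonpos_nonneg)
    ultimately show ?thesis using False tail by (simp add: B_def)
  qed
  then show ?thesis by blast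
qed

lemma RatG_outside_curve_pts:
  "F \<in> RatG V E src tgt len \<Longrightarrow> p \<notin> curve_pts V E tgt len \<Longrightarrow> F p = -\<infinity>"
  by (simp add: RatG_def)

lemma RatG_not_PInf: "F \<in> RatG V E src tgt len \<Longrightarrow> F p \<noteq> \<infinity>"
  by (cases "p \<in> curve_pts V E tgt len") (auto simp: RatG_def)

lemma RatG_edge_bounded_above:
  assumes F: "F \<in> RatG V E src tgt len" and e: "e \<in> E"
    and leaf: "len e = \<infinity> \<Longrightarrow> \<exists>\<^sub>F t in at_top. F (Inr (e, t)) \<le> 0"
  shows "\<exists>B. \<forall>t. 0 < t \<and> ereal t < len e \<longrightarrow> F (Inr (e, t)) \<le> ereal B"
proof -
  let ?g = "edge_fun src tgt len F e"
  have g: "?g t = F (Inr (e, t))" if "0 < t" "ereal t < len e" for t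
    using that by (auto simp: edge_fun_def)
  consider "\<forall>p\<in>curve_pts V E tgt len. F p = -\<infinity>" | "piecewise_affine_int (len e) ?g"
    using F e unfolding RatG_def by blast
  then show ?thesis
  proof cases
    case 1
    with e show ?thesis by (auto simp: curve_pts_def)
  next
    case pa: 2
    show ?thesis
    proof (cases "len e = \<infinity>")
      case True
      have "\<forall>\<^sub>F t in at_top. F (Inr (e, t)) \<le> 0 \<longrightarrow> ?g t \<le> 0"
        using eventually_gt_at_top[of 0] by eventually_elim (simp add: g True)
      then have "\<exists>\<^sub>F t in at_top. ?g t \<le> 0"
        by (rule frequently_rev_mp[OF leaf[OF True]])
      then show ?thesis
        using piecewise_affine_int_bounded_above_infinite pa True g by (metis ereal_less(3))
    next
      case False
      then show ?thesis using piecewise_affine_int_bounded_above_finite[OF pa] g by metis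
    qed
  qed
qed

lemma RatG_bounded_above:
  assumes \<Gamma>: "tropical_curve V E src tgt len" and F: "F \<in> RatG V E src tgt len"
    and leaves: "\<And>e. e \<in> E \<Longrightarrow> len e = \<infinity> \<Longrightarrow> \<exists>\<^sub>F t in at_top. F (Inr (e, t)) \<le> 0"
  shows "\<exists>c. \<forall>p. F p \<le> ereal c"
proof -
  have "\<forall>e\<in>E. \<exists>B. \<forall>t. 0 < t \<and> ereal t < len e \<longrightarrow> F (Inr (e, t)) \<le> ereal B"
    using RatG_edge_bounded_above[OF F] leaves by blast
  then obtain B where B: "\<And>e t. e \<in> E \<Longrightarrow> 0 < t \<Longrightarrow> ereal t < len e \<Longrightarrow> F (Inr (e, t)) \<le> ereal (B e)"
    by metis
  define c where "c = Max (insert 0 (B ` E \<union> (\<lambda>v. real_of_ereal (F (Inl v))) ` V))"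
  have fin: "finite V" "finite E" using \<Gamma> by (auto simp: tropical_curve_def)
  have "F p \<le> ereal c" for p
  proof (cases "p \<in> curve_pts V E tgt len")
    case True
    then consider v where "p = Inl v" "v \<in> V" | e t where "p = Inr (e, t)" "e \<in> E" "0 < t" "ereal t < len e"
      by (auto simp: curve_pts_def)
    then show ?thesis
    proof cases
      case 1
      have "\<bar>F p\<bar> \<noteq> \<infinity> \<or> F p = -\<infinity>" using F True by (auto simp: RatG_def)
      moreover have "real_of_ereal (F (Inl v)) \<le> c" using 1 fin by (auto simp: c_def)
      ultimately show ?thesis using 1 by (cases "F p") auto
    next
      case 2
      have "B e \<le> c" using 2 fin by (auto simp: c_def)
      with B[OF 2(2-4)] 2(1) show ?thesis by (simp add: order_trans)
    qed
  qed (simp add: RatG_outside_curve_pts[OF F])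
  then show ?thesis by blast
qed

lemma RatG_unbounded_imp_eventually_pos_on_leaf:
  assumes \<Gamma>: "tropical_curve V E src tgt len" and F: "F \<in> RatG V E src tgt len"
    and unbounded: "\<And>c. c \<noteq> \<infinity> \<Longrightarrow> fplus F (rat_const V E tgt len c) \<noteq> rat_const V E tgt len c"
  shows "\<exists>e\<in>E. len e = \<infinity> \<and> (\<forall>\<^sub>F t in at_top. F (Inr (e, t)) > 0)"
proof (rule ccontr)
  assume "\<not> ?thesis"
  then have "\<exists>\<^sub>F t in at_top. F (Inr (e, t)) \<le> 0" if "e \<in> E" "len e = \<infinity>" for e
    using that by (auto simp: frequently_def not_le)
  then obtain c where c: "\<And>p. F p \<le> ereal c" using RatG_bounded_above[OF \<Gamma> F] by blast
  have "fplus F (rat_const V E tgt len (ereal c)) = rat_const V E tgt len (ereal c)"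
  proof
    fix p show "fplus F (rat_const V E tgt len (ereal c)) p = rat_const V E tgt len (ereal c) p"
      using c[of p] RatG_outside_curve_pts[OF F, of p] by (auto simp: fplus_def rat_const_def max_def)
  qed
  with unbounded[of "ereal c"] show False by simp
qed

lemma ereal_pos_add_neq_max:
  fixes a b :: ereal
  assumes "0 < a" "0 < b" "a \<noteq> \<infinity>" "b \<noteq> \<infinity>"
  shows "a + b \<noteq> max a b"
  using assms by (cases a; cases b) (auto simp: max_def)

lemma RatG_no_disjoint_unbounded_sequence:
  assumes \<Gamma>: "tropical_curve V E src tgt len"
    and G: "\<And>j::nat. G j \<in> RatG V E src tgt len"
    and unbounded: "\<And>j c. c \<noteq> \<infinity> \<Longrightarrow> fplus (G j) (rat_const V E tgt len c) \<noteq> rat_const V E tgt len c"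
    and disjoint: "\<And>i j. i \<noteq> j \<Longrightarrow> ftimes (G i) (G j) = fplus (G i) (G j)"
  shows False
proof -
  obtain leaf where leaf: "\<And>j. leaf j \<in> E" "\<And>j. len (leaf j) = \<infinity>"
    "\<And>j. \<forall>\<^sub>F t in at_top. G j (Inr (leaf j, t)) > 0"
    using RatG_unbounded_imp_eventually_pos_on_leaf[OF \<Gamma> G unbounded] by metis
  have "inj leaf"
  proof (rule injI, rule ccontr)
    fix i j assume same: "leaf i = leaf j" and "i \<noteq> j"
    have "\<forall>\<^sub>F t in at_top. 0 < t \<and> G i (Inr (leaf i, t)) > 0 \<and> G j (Inr (leaf i, t)) > 0"
      using eventually_gt_at_top[of 0] leaf(3)[of i] leaf(3)[of j] unfolding same
      by (simp add: eventually_conj_iff)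
    then obtain t where t: "0 < t" "G i (Inr (leaf i, t)) > 0" "G j (Inr (leaf i, t)) > 0"
      using eventually_happens'[OF trivial_limit_at_top_linorder] by blast
    have "G i (Inr (leaf i, t)) + G j (Inr (leaf i, t)) = max (G i (Inr (leaf i, t))) (G j (Inr (leaf i, t)))"
      using fun_cong[OF disjoint[OF \<open>i \<noteq> j\<close>]] by (simp add: ftimes_def fplus_def)
    with t G show False using ereal_pos_add_neq_max RatG_not_PInf by metis
  qed
  then have "infinite (range leaf)" by (rule range_inj_infinite)
  moreover have "range leaf \<subseteq> E" using leaf(1) by auto
  moreover have "finite E" using \<Gamma> by (simp add: tropical_curve_def)
  ultimately show False using finite_subset by blast
qed

theorem corollary3p13:
  fixes n :: nat
    and V :: "'v set" and E :: "'e set"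
    and src tgt :: "'e \<Rightarrow> 'v" and len :: "'e \<Rightarrow> ereal"
  assumes "2 \<le> n"
    and "tropical_curve V E src tgt len"
  shows "\<not> (\<exists>\<phi>. talg_iso (TRat n) (frac_add n) (frac_mul n) (frac_const n)
                    (RatG V E src tgt len) fplus ftimes (rat_const V E tgt len) \<phi>)"
proof
  assume "\<exists>\<phi>. talg_iso (TRat n) (frac_add n) (frac_mul n) (frac_const n)
                    (RatG V E src tgt len) fplus ftimes (rat_const V E tgt len) \<phi>"
  then obtain \<phi> where bij: "bij_betw \<phi> (TRat n) (RatG V E src tgt len)"
    and add: "\<forall>x\<in>TRat n. \<forall>y\<in>TRat n. \<phi> (frac_add n x y) = fplus (\<phi> x) (\<phi> y)"
    and mul: "\<forall>x\<in>TRat n. \<forall>y\<in>TRat n. \<phi> (frac_mul n x y) = ftimes (\<phi> x) (\<phi> y)"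
    and const: "\<forall>c. c \<noteq> \<infinity> \<longrightarrow> \<phi> (frac_const n c) = rat_const V E tgt len c"
    unfolding talg_iso_def by blast
  note cone_frac_in = cone_frac_in_TRat[OF assms(1)]
  show False
  proof (rule RatG_no_disjoint_unbounded_sequence[OF assms(2), of "\<lambda>j. \<phi> (cone_frac n j)"])
    show "\<phi> (cone_frac n j) \<in> RatG V E src tgt len" for j
      using bij cone_frac_in by (auto dest: bij_betw_imp_surj_on)
    show "ftimes (\<phi> (cone_frac n i)) (\<phi> (cone_frac n j)) = fplus (\<phi> (cone_frac n i)) (\<phi> (cone_frac n j))"
      if "i \<noteq> j" for i j
      using add mul cone_frac_in cone_frac_mul_eq_add[OF assms(1) that] by metis
    show "fplus (\<phi> (cone_frac n j)) (rat_const V E tgt len c) \<noteq> rat_const V E tgt len c"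
      if c: "c \<noteq> \<infinity>" for j c
    proof
      assume "fplus (\<phi> (cone_frac n j)) (rat_const V E tgt len c) = rat_const V E tgt len c"
      then have "\<phi> (frac_add n (cone_frac n j) (frac_const n c)) = \<phi> (frac_const n c)"
        using add const c cone_frac_in frac_const_in_TRat by simp
      then have "frac_add n (cone_frac n j) (frac_const n c) = frac_const n c"
        using bij_betw_imp_inj_on[OF bij] cone_frac_in frac_const_in_TRat[OF c] frac_add_in_TRat
        by (auto dest: inj_onD)
      with cone_frac_add_const_neq[OF assms(1) c] show False ..
    qed
  qed
qed

end
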